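(* Let $m,k\in\mathbb{N}$ and let $\alpha\in\mathbb{C}$ with $\alpha,\ 2+\alpha+2m+k,\ 2+\alpha+2m\notin\mathbb{Z}_0^-$. Then \[ {}_3F_2\left[\begin{array}{r} -2m-1,\ \alpha,\ 2+\alpha+2m+k;\\ -2m-k-1,\ 2+\alpha+2m;\end{array}1\right]_{2m+1}=\frac{(1+\alpha)(2+2k+\alpha+4m)(2+\alpha)_{2m}\left(1+\frac{\alpha}{2}+k\right)_{2m}}{(2+\alpha)(1+2m+k)\left(2+\frac{\alpha}{2}\right)_{2m}(1+k)_{2m}}. \]
   Context: $\mathbb{N}=\{1,2,3,\dots\}$, $\mathbb{Z}_0^-=\{0,-1,-2,\dots\}$. For $a\in\mathbb{C}$ and $n\in\mathbb{N}_0$, $(a)_0=1$ and $(a)_n=a(a+1)\cdots(a+n-1)$. For $N\in\mathbb{N}_0$, ${}_3F_2\left[\begin{array}{r} a_1,a_2,a_3;\\ b_1,b_2;\end{array}z\right]_N=\sum_{n=0}^{N}\frac{(a_1)_n(a_2)_n(a_3)_n}{(b_1)_n(b_2)_n}\frac{z^n}{n!}$ (the sum of the first $N+1$ terms), defined whenever $(b_1)_n(b_2)_n\neq0$ for $0\le n\le N$. *)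

theory Defs
  imports Complex_Main
begin

definition hyp3F2_trunc :: "complex \<Rightarrow> complex \<Rightarrow> complex \<Rightarrow> complex \<Rightarrow> complex \<Rightarrow> complex \<Rightarrow> nat \<Rightarrow> complex" where
  "hyp3F2_trunc a1 a2 a3 b1 b2 z N =
     (\<Sum>n=0..N. pochhammer a1 n * pochhammer a2 n * pochhammer a3 n
        / (pochhammer b1 n * pochhammer b2 n) * z ^ n / of_nat (fact n))"

definition nonpos_int :: "complex \<Rightarrow> bool" where
  "nonpos_int z \<longleftrightarrow> (\<exists>n::nat. z = - of_nat n)"

end

theory Submission
  imports Defs
begin

(*
  With b = 1 + \<alpha> + N let F k = 3F2[-N, \<alpha>, b + k; -N - k, b; 1] truncated after the term of
  index N.  For k = 0 the parameter pairs cancel and F 0 = \<Sum>n\<le>N. (\<alpha>)_n / n! = (\<alpha> + 1)_N / N!.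
  Raising k moves a3 up and b1 down by one; this contiguous relation, together with the ratio
  of consecutive terms, yields a Zeilberger-style telescoping certificate and hence the
  first-order recurrence
    (N + k + 1) (\<alpha> + 2k + 2) F (k + 1) = (k + 1) (\<alpha> + 2k + 2N + 2) F k,
  which is solved by F k = (\<alpha> + 1)_N (1 + \<alpha>/2 + k)_N / ((1 + \<alpha>/2)_N (k + 1)_N) for every N.
  The theorem is the case N = 2m + 1, rewritten.
*)

lemma not_nonpos_int_add_of_nat: "\<not> nonpos_int z \<Longrightarrow> \<not> nonpos_int (z + of_nat n)"
  unfolding nonpos_int_def by (metis add_diff_cancel_right' diff_conv_add_uminus minus_add_distrib of_nat_add)

lemma add_of_nat_neq_0: "\<not> nonpos_int z \<Longrightarrow> z + of_nat n \<noteq> 0"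
  unfolding nonpos_int_def by (metis add.commute add_eq_0_iff)

lemma pochhammer_neq_0_if_not_nonpos_int: "\<not> nonpos_int z \<Longrightarrow> pochhammer z n \<noteq> 0"
  by (auto simp: pochhammer_eq_0_iff nonpos_int_def)

lemma not_nonpos_int_half: "\<not> nonpos_int \<alpha> \<Longrightarrow> \<not> nonpos_int (1 + \<alpha> / 2)"
proof
  assume "nonpos_int (1 + \<alpha> / 2)"
  then obtain j where j: "1 + \<alpha> / 2 = - of_nat j" by (auto simp: nonpos_int_def)
  have "\<alpha> = 2 * (1 + \<alpha> / 2) - 2" by simp
  also have "\<dots> = - of_nat (2 * j + 2)" unfolding j by simp
  finally have "nonpos_int \<alpha>" unfolding nonpos_int_def by blast
  moreover assume "\<not> nonpos_int \<alpha>"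
  ultimately show False by blast
qed

lemma pochhammer_add_1_mult: "pochhammer (a + 1) n * a = pochhammer a n * (a + of_nat n)"
  using pochhammer_rec[of a n] pochhammer_Suc[of a n] by (simp add: mult.commute)

definition hyp3F2_term :: "complex \<Rightarrow> complex \<Rightarrow> complex \<Rightarrow> complex \<Rightarrow> complex \<Rightarrow> complex \<Rightarrow> nat \<Rightarrow> complex" where
  "hyp3F2_term a1 a2 a3 b1 b2 z n = pochhammer a1 n * pochhammer a2 n * pochhammer a3 n
     / (pochhammer b1 n * pochhammer b2 n) * z ^ n / of_nat (fact n)"

lemma hyp3F2_trunc_eq_sum:
  "hyp3F2_trunc a1 a2 a3 b1 b2 z N = (\<Sum>n=0..N. hyp3F2_term a1 a2 a3 b1 b2 z n)"
  unfolding hyp3F2_trunc_def hyp3F2_term_def ..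

lemma hyp3F2_term_Suc:
  "hyp3F2_term a1 a2 a3 b1 b2 z (Suc n) = hyp3F2_term a1 a2 a3 b1 b2 z n
     * ((a1 + of_nat n) * (a2 + of_nat n) * (a3 + of_nat n) * z / ((b1 + of_nat n) * (b2 + of_nat n) * (of_nat n + 1)))"
  unfolding hyp3F2_term_def pochhammer_Suc fact_Suc of_nat_mult power_Suc
  by (simp add: divide_inverse inverse_mult_distrib ac_simps)

lemma hyp3F2_term_contiguous:
  assumes "pochhammer b1 n \<noteq> 0" "pochhammer (b1 - 1) n \<noteq> 0"
  shows "hyp3F2_term a1 a2 (a3 + 1) (b1 - 1) b2 z n * (a3 * (b1 - 1))
       = hyp3F2_term a1 a2 a3 b1 b2 z n * ((a3 + of_nat n) * (b1 - 1 + of_nat n))"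
proof -
  define c where "c = pochhammer a1 n * pochhammer a2 n * z ^ n / (pochhammer b2 n * fact n)"
  have factored: "hyp3F2_term a1 a2 a b b2 z n = c * (pochhammer a n / pochhammer b n)" for a b
    unfolding hyp3F2_term_def c_def by (simp add: ac_simps)
  have "pochhammer (b1 - 1) n * (b1 - 1 + of_nat n) = pochhammer b1 n * (b1 - 1)"
    using pochhammer_add_1_mult[of "b1 - 1" n] by simp
  then have "(b1 - 1) / pochhammer (b1 - 1) n = (b1 - 1 + of_nat n) / pochhammer b1 n"
    using assms by (simp add: divide_simps) (simp add: ac_simps)
  then have "c * (pochhammer (a3 + 1) n / pochhammer (b1 - 1) n) * (a3 * (b1 - 1))
      = c * (pochhammer (a3 + 1) n * a3) * ((b1 - 1 + of_nat n) / pochhammer b1 n)"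
    by (metis (no_types, lifting) mult.assoc mult.left_commute times_divide_eq_left times_divide_eq_right)
  also have "\<dots> = c * (pochhammer a3 n / pochhammer b1 n) * ((a3 + of_nat n) * (b1 - 1 + of_nat n))"
    unfolding pochhammer_add_1_mult by (simp add: ac_simps)
  finally show ?thesis
    unfolding factored .
qed

definition hyp_family :: "complex \<Rightarrow> nat \<Rightarrow> nat \<Rightarrow> complex" where
  "hyp_family \<alpha> N k = hyp3F2_trunc (- of_nat N) \<alpha> (1 + \<alpha> + of_nat N + of_nat k)
     (- of_nat N - of_nat k) (1 + \<alpha> + of_nat N) 1 N"

lemma hyp_family_0:
  assumes "\<not> nonpos_int \<alpha>"
  shows "hyp_family \<alpha> N 0 = pochhammer (\<alpha> + 1) N / fact N"
proof -
  have "pochhammer (1 + \<alpha> + of_nat N) n \<noteq> 0" for n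
    using pochhammer_neq_0_if_not_nonpos_int not_nonpos_int_add_of_nat[OF assms, of "Suc N"]
    by (simp add: add_ac)
  moreover have "pochhammer (- of_nat N :: complex) n \<noteq> 0" if "n \<le> N" for n
    using that by (simp add: pochhammer_of_nat_eq_0_iff)
  ultimately have "hyp3F2_term (- of_nat N) \<alpha> (1 + \<alpha> + of_nat N) (- of_nat N) (1 + \<alpha> + of_nat N) 1 n
      = (\<alpha> - 1 + of_nat n) gchoose n" if "n \<le> N" for n
    using that by (simp add: hyp3F2_term_def gbinomial_pochhammer')
  then have "hyp_family \<alpha> N 0 = (\<Sum>n\<le>N. (\<alpha> - 1 + of_nat n) gchoose n)"
    unfolding hyp_family_def hyp3F2_trunc_eq_sum atLeast0AtMost by simp
  also have "\<dots> = (\<alpha> + of_nat N) gchoose N"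
    using gbinomial_parallel_sum[of "\<alpha> - 1" N] by simp
  also have "\<dots> = pochhammer (\<alpha> + 1) N / fact N"
    by (simp add: gbinomial_pochhammer')
  finally show ?thesis .
qed

lemma hyp_family_Suc:
  assumes "\<not> nonpos_int \<alpha>"
  shows "(of_nat N + of_nat k + 1) * (\<alpha> + 2 * of_nat k + 2) * hyp_family \<alpha> N (Suc k)
       = (of_nat k + 1) * (\<alpha> + 2 * of_nat k + 2 * of_nat N + 2) * hyp_family \<alpha> N k"
proof -
  define b where "b = 1 + \<alpha> + of_nat N"
  define c where "c = b + of_nat k"
  define t where "t j n = hyp3F2_term (- of_nat N) \<alpha> (b + of_nat j) (- of_nat N - of_nat j) b 1 n" for j n
  have family: "hyp_family \<alpha> N j = (\<Sum>n=0..N. t j n)" for j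
    unfolding hyp_family_def hyp3F2_trunc_eq_sum t_def b_def ..
  have b_shift_neq_0: "b + of_nat n \<noteq> 0" for n
    using add_of_nat_neq_0[OF assms, of "Suc N + n"] by (simp add: b_def add_ac)
  have c_neq_0: "c \<noteq> 0"
    using b_shift_neq_0[of k] by (simp add: c_def)
  have ratio_n: "t k (Suc n) * ((of_nat n + 1) * (b + of_nat n) * (of_nat N + of_nat k - of_nat n))
      = t k n * ((of_nat N - of_nat n) * (\<alpha> + of_nat n) * (c + of_nat n))" if "n \<le> N" for n
  proof (cases "n = N + k")
    case True
    with that show ?thesis by simp
  next
    case False
    define p where "p = (of_nat N - of_nat n) * (\<alpha> + of_nat n) * (c + of_nat n)"
    define q where "q = (of_nat n + 1) * (b + of_nat n) * (of_nat N + of_nat k - of_nat n)"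
    have "(of_nat N + of_nat k - of_nat n :: complex) \<noteq> 0"
      using False by (metis eq_iff_diff_eq_0 of_nat_add of_nat_eq_iff)
    moreover have "(of_nat n + 1 :: complex) \<noteq> 0"
      by (metis of_nat_Suc of_nat_eq_0_iff add.commute nat.distinct(1))
    ultimately have "q \<noteq> 0"
      using b_shift_neq_0[of n] by (simp add: q_def)
    have "(- of_nat N + of_nat n) * (\<alpha> + of_nat n) * (b + of_nat k + of_nat n) * 1
        / ((- of_nat N - of_nat k + of_nat n) * (b + of_nat n) * (of_nat n + 1)) = (- p) / (- q)"
      unfolding p_def q_def c_def by (rule arg_cong2[where f="(/)"]) (simp_all add: algebra_simps)
    then have "t k (Suc n) = t k n * (p / q)"
      unfolding t_def hyp3F2_term_Suc minus_divide_divide by simp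
    with \<open>q \<noteq> 0\<close> show ?thesis
      unfolding p_def[symmetric] q_def[symmetric] by simp
  qed
  have ratio_k: "t (Suc k) n * (c * (of_nat N + of_nat k + 1))
      = t k n * ((c + of_nat n) * (of_nat N + of_nat k + 1 - of_nat n))" if "n \<le> N" for n
  proof -
    have poch_neq_0: "pochhammer (- of_nat N - of_nat j :: complex) n \<noteq> 0" for j
      using that pochhammer_of_nat_eq_0_iff[of "N + j" n, where 'a=complex] by simp
    have "pochhammer (- of_nat N - of_nat k - 1 :: complex) n \<noteq> 0"
      using poch_neq_0[of "Suc k"] by (simp add: algebra_simps)
    from hyp3F2_term_contiguous[OF poch_neq_0[of k] this, of "- of_nat N" \<alpha> c b 1]
    show ?thesis
      unfolding t_def c_def by (simp add: algebra_simps)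
  qed
  \<comment> \<open>Zeilberger certificate: the recurrence holds termwise up to the difference G (n + 1) - G n.\<close>
  define G where "G n = t k n * (of_nat n * (b + of_nat n - 1) * (of_nat N + of_nat k + 1 - of_nat n))" for n
  have G_Suc: "G (Suc n) = t k n * ((of_nat N - of_nat n) * (\<alpha> + of_nat n) * (c + of_nat n))" if "n \<le> N" for n
    using ratio_n[OF that] unfolding G_def by (simp add: algebra_simps)
  define K where "K = c * (of_nat N + of_nat k + 1) * (\<alpha> + 2 * of_nat k + 2)"
  define D where "D = c * (of_nat k + 1) * (\<alpha> + 2 * of_nat k + 2 * of_nat N + 2)"
  have termwise: "t (Suc k) n * K = t k n * D + (G (Suc n) - G n)" if "n \<le> N" for n
  proof -
    have "t (Suc k) n * K = t k n * ((c + of_nat n) * (of_nat N + of_nat k + 1 - of_nat n) * (\<alpha> + 2 * of_nat k + 2))"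
      using ratio_k[OF that] unfolding K_def by (metis mult.assoc)
    then show ?thesis
      unfolding G_Suc[OF that] unfolding G_def D_def c_def b_def by (simp add: algebra_simps)
  qed
  have "hyp_family \<alpha> N (Suc k) * K = (\<Sum>n=0..N. t k n * D + (G (Suc n) - G n))"
    unfolding family sum_distrib_right by (rule sum.cong) (simp_all add: termwise)
  also have "\<dots> = hyp_family \<alpha> N k * D + (G (Suc N) - G 0)"
    unfolding sum.distrib family sum_distrib_right sum_Suc_diff[OF le0] ..
  also have "G (Suc N) - G 0 = 0"
    using G_Suc[of N] by (simp add: G_def)
  finally have "hyp_family \<alpha> N (Suc k) * K = hyp_family \<alpha> N k * D" by simp
  with c_neq_0 show ?thesis
    unfolding K_def D_def by (simp add: ac_simps)
qed

lemma hyp_family_closed_form: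
  assumes "\<not> nonpos_int \<alpha>"
  shows "hyp_family \<alpha> N k = pochhammer (\<alpha> + 1) N * pochhammer (1 + \<alpha> / 2 + of_nat k) N
           / (pochhammer (1 + \<alpha> / 2) N * pochhammer (of_nat k + 1) N)"
proof (induction k)
  case 0
  have "pochhammer (1 + \<alpha> / 2) N \<noteq> 0"
    by (rule pochhammer_neq_0_if_not_nonpos_int[OF not_nonpos_int_half[OF assms]])
  then show ?case
    using hyp_family_0[OF assms] by (simp add: pochhammer_fact)
next
  case (Suc k)
  define u where "u = 1 + \<alpha> / 2 + of_nat k"
  define v :: complex where "v = of_nat k + 1"
  define r where "r = pochhammer (\<alpha> + 1) N / pochhammer (1 + \<alpha> / 2) N"
  have closed: "pochhammer (\<alpha> + 1) N * pochhammer x N / (pochhammer (1 + \<alpha> / 2) N * pochhammer y N)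
      = r * (pochhammer x N / pochhammer y N)" for x y
    unfolding r_def by simp
  have u_neq_0: "u \<noteq> 0"
    using add_of_nat_neq_0[OF not_nonpos_int_half[OF assms]] by (simp add: u_def)
  have v_neq_0: "v + of_nat n \<noteq> 0" for n
    unfolding v_def by (metis of_nat_Suc of_nat_add of_nat_eq_0_iff add.commute add_Suc nat.distinct(1))
  have "pochhammer v N \<noteq> 0"
    using v_neq_0 by (auto simp: pochhammer_eq_0_iff eq_neg_iff_add_eq_0)
  moreover have shift: "pochhammer (v + 1) N * v = pochhammer v N * (v + of_nat N)"
    by (rule pochhammer_add_1_mult)
  ultimately have "pochhammer (v + 1) N \<noteq> 0"
    using v_neq_0[of N] by auto
  with \<open>pochhammer v N \<noteq> 0\<close> have v_shift: "(v + of_nat N) / pochhammer (v + 1) N = v / pochhammer v N"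
    using shift by (simp add: frac_eq_eq ac_simps)
  have "2 * u * (v + of_nat N) * hyp_family \<alpha> N (Suc k)
      = 2 * v * (u + of_nat N) * hyp_family \<alpha> N k"
    using hyp_family_Suc[OF assms, of N k] unfolding u_def v_def by (simp add: algebra_simps)
  also have "\<dots> = 2 * r * (v / pochhammer v N) * (pochhammer u N * (u + of_nat N))"
    unfolding Suc closed u_def[symmetric] v_def[symmetric] by (simp add: ac_simps)
  also have "\<dots> = 2 * r * ((v + of_nat N) / pochhammer (v + 1) N) * (pochhammer (u + 1) N * u)"
    unfolding v_shift pochhammer_add_1_mult ..
  also have "\<dots> = 2 * u * (v + of_nat N) * (r * (pochhammer (u + 1) N / pochhammer (v + 1) N))"
    by (simp add: ac_simps)
  finally have "hyp_family \<alpha> N (Suc k) = r * (pochhammer (u + 1) N / pochhammer (v + 1) N)"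
    using u_neq_0 v_neq_0[of N] by (subst (asm) mult_left_cancel) simp_all
  moreover have "1 + \<alpha> / 2 + of_nat (Suc k) = u + 1" "of_nat (Suc k) + 1 = v + 1"
    unfolding u_def v_def by simp_all
  ultimately show ?case
    unfolding closed by (simp only:)
qed

lemma hyp_family_odd:
  assumes "\<not> nonpos_int \<alpha>"
  shows "hyp_family \<alpha> (Suc (2 * m)) k
       = (1 + \<alpha>) * (2 + 2 * of_nat k + \<alpha> + 4 * of_nat m) * pochhammer (2 + \<alpha>) (2 * m)
           * pochhammer (1 + \<alpha> / 2 + of_nat k) (2 * m)
         / ((2 + \<alpha>) * (1 + 2 * of_nat m + of_nat k) * pochhammer (2 + \<alpha> / 2) (2 * m)
           * pochhammer (1 + of_nat k) (2 * m))"
proof -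
  have "pochhammer (\<alpha> + 1) (Suc (2 * m)) = (1 + \<alpha>) * pochhammer (2 + \<alpha>) (2 * m)"
    and "pochhammer (1 + \<alpha> / 2) (Suc (2 * m)) = (2 + \<alpha>) / 2 * pochhammer (2 + \<alpha> / 2) (2 * m)"
    by (simp_all add: pochhammer_rec add_ac)
  moreover have "pochhammer (1 + \<alpha> / 2 + of_nat k) (Suc (2 * m))
      = pochhammer (1 + \<alpha> / 2 + of_nat k) (2 * m) * ((2 + 2 * of_nat k + \<alpha> + 4 * of_nat m) / 2)"
    and "pochhammer (of_nat k + 1 :: complex) (Suc (2 * m))
      = pochhammer (1 + of_nat k) (2 * m) * (1 + 2 * of_nat m + of_nat k)"
    by (simp_all add: pochhammer_Suc add_ac)
  moreover have "a * P * (A * (x / 2)) / (z / 2 * C * (E * y)) = a * x * P * A / (z * y * C * E)"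
    for a P A x z C E y :: complex
    by (simp add: field_simps)
  ultimately show ?thesis
    unfolding hyp_family_closed_form[OF assms] by (simp only:)
qed

theorem mainTheorem15:
  fixes m k :: nat and \<alpha> :: complex
  assumes "m \<ge> 1" and "k \<ge> 1"
    and "\<not> nonpos_int \<alpha>"
    and "\<not> nonpos_int (2 + \<alpha> + 2 * of_nat m + of_nat k)"
    and "\<not> nonpos_int (2 + \<alpha> + 2 * of_nat m)"
  shows "hyp3F2_trunc (- 2 * of_nat m - 1) \<alpha> (2 + \<alpha> + 2 * of_nat m + of_nat k)
           (- 2 * of_nat m - of_nat k - 1) (2 + \<alpha> + 2 * of_nat m) 1 (2 * m + 1)
       = (1 + \<alpha>) * (2 + 2 * of_nat k + \<alpha> + 4 * of_nat m) * pochhammer (2 + \<alpha>) (2 * m)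
           * pochhammer (1 + \<alpha> / 2 + of_nat k) (2 * m)
         / ((2 + \<alpha>) * (1 + 2 * of_nat m + of_nat k) * pochhammer (2 + \<alpha> / 2) (2 * m)
           * pochhammer (1 + of_nat k) (2 * m))"
proof -
  have "- of_nat (Suc (2 * m)) = (- 2 * of_nat m - 1 :: complex)"
    and "- 2 * of_nat m - 1 - of_nat k = (- 2 * of_nat m - of_nat k - 1 :: complex)"
    and "1 + \<alpha> + of_nat (Suc (2 * m)) = 2 + \<alpha> + 2 * of_nat m"
    by simp_all
  then have "hyp3F2_trunc (- 2 * of_nat m - 1) \<alpha> (2 + \<alpha> + 2 * of_nat m + of_nat k)
      (- 2 * of_nat m - of_nat k - 1) (2 + \<alpha> + 2 * of_nat m) 1 (2 * m + 1)
      = hyp_family \<alpha> (Suc (2 * m)) k"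
    unfolding hyp_family_def by (simp only: Suc_eq_plus1)
  then show ?thesis
    unfolding hyp_family_odd[OF assms(3)] .
qed

end
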